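(* Let $(R,\mathfrak{m})$ be a local ring and $\mathcal{X}$ a resolving subcategory of $\operatorname{mod} R$. If $\operatorname{radius}\mathcal{X}<\infty$, then $\sup_{X\in\mathcal{X}}\{\ell\ell(\Gamma_\mathfrak{m}(X))\}<\infty$.
   Context: All modules are finitely generated; $\operatorname{mod} R$ is the category of finitely generated $R$-modules; subcategories are full and closed under isomorphism. A subcategory is resolving if it contains the projective modules and is closed under direct summands, extensions, and kernels of epimorphisms. $\Gamma_\mathfrak{m}(X)$ is the submodule of elements of $X$ annihilated by some power of $\mathfrak{m}$; $\ell\ell(N)$ (Loewy length) is the infimum of $n\ge0$ with $\mathfrak{m}^nN=0$. Radius: $\Omega^iX$ is the $i$-th syzygy in the minimal free resolution, $\Omega^0X=X$; $[\mathcal{X}]$ is the additive closure (direct summands of finite direct sums) of the subcategory consisting of $R$ and all $\Omega^iX$, $i\ge0$, $X\in\mathcal{X}$; $\mathcal{X}\circ\mathcal{Y}$ consists of modules $M$ with an exact sequence $0\to X\to M\to Y\to0$, $X\in\mathcal{X}$, $Y\in\mathcal{Y}$; $[C]_1=[C]$, $[C]_r=[[C]_{r-1}\circ[C]]$; the radius of $\mathcal{X}$ is the infimum of $n\ge0$ with $\mathcal{X}\subseteq[C]_{n+1}$ for some $C\in\operatorname{mod} R$. *)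

theory Defs
  imports "HOL-Algebra.Ring_Divisibility" "HOL-Algebra.Ideal" "HOL-Algebra.Module" "HOL-Library.Extended_Nat"
begin

definition local_ring :: "'a ring \<Rightarrow> bool" where
  "local_ring R \<longleftrightarrow> cring R \<and> noetherian_ring R \<and> (\<exists>!I. maximalideal I R)"

definition max_ideal :: "'a ring \<Rightarrow> 'a set" where
  "max_ideal R = (THE I. maximalideal I R)"

text \<open>Every finitely generated R-module is isomorphic to one whose elements are
  cosets of a submodule of R^n, i.e. sets of lists; so modules with carrier in
  the type 'a list set form a universe containing a copy of every object of mod R.\<close>

type_synonym 'a umod = "('a, 'a list set) module"

definition modhom :: "'a ring \<Rightarrow> ('a, 'b, 'c) module_scheme \<Rightarrow> ('a, 'd, 'e) module_scheme
    \<Rightarrow> ('b \<Rightarrow> 'd) \<Rightarrow> bool" where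
  "modhom R M N f \<longleftrightarrow> f \<in> carrier M \<rightarrow> carrier N
     \<and> (\<forall>x\<in>carrier M. \<forall>y\<in>carrier M. f (x \<oplus>\<^bsub>M\<^esub> y) = f x \<oplus>\<^bsub>N\<^esub> f y)
     \<and> (\<forall>a\<in>carrier R. \<forall>x\<in>carrier M. f (a \<odot>\<^bsub>M\<^esub> x) = a \<odot>\<^bsub>N\<^esub> f x)"

definition mod_iso :: "'a ring \<Rightarrow> ('a, 'b, 'c) module_scheme \<Rightarrow> ('a, 'd, 'e) module_scheme \<Rightarrow> bool" where
  "mod_iso R M N \<longleftrightarrow> (\<exists>f. modhom R M N f \<and> bij_betw f (carrier M) (carrier N))"

definition fg_mod :: "'a ring \<Rightarrow> ('a, 'b) module \<Rightarrow> bool" where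
  "fg_mod R M \<longleftrightarrow> module R M \<and>
     (\<exists>xs. set xs \<subseteq> carrier M \<and> (\<forall>m\<in>carrier M. \<exists>cs. length cs = length xs \<and> set cs \<subseteq> carrier R
        \<and> m = finsum M (\<lambda>i. (cs ! i) \<odot>\<^bsub>M\<^esub> (xs ! i)) {..<length xs}))"

definition free_mod :: "'a ring \<Rightarrow> nat \<Rightarrow> ('a, 'a list) module" where
  "free_mod R n = \<lparr>carrier = {xs. length xs = n \<and> set xs \<subseteq> carrier R},
     mult = (\<lambda>xs ys. map2 (\<lambda>x y. x \<otimes>\<^bsub>R\<^esub> y) xs ys), one = replicate n \<one>\<^bsub>R\<^esub>,
     zero = replicate n \<zero>\<^bsub>R\<^esub>, add = (\<lambda>xs ys. map2 (\<lambda>x y. x \<oplus>\<^bsub>R\<^esub> y) xs ys),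
     smult = (\<lambda>a xs. map (\<lambda>x. a \<otimes>\<^bsub>R\<^esub> x) xs)\<rparr>"

definition kernel_mod :: "('a, 'b) module \<Rightarrow> ('a, 'd, 'e) module_scheme \<Rightarrow> ('b \<Rightarrow> 'd) \<Rightarrow> ('a, 'b) module" where
  "kernel_mod M N g = M\<lparr>carrier := {x \<in> carrier M. g x = \<zero>\<^bsub>N\<^esub>}\<rparr>"

definition short_exact :: "'a ring \<Rightarrow> ('a, 'b) module \<Rightarrow> ('a, 'c) module \<Rightarrow> ('a, 'd) module
    \<Rightarrow> ('b \<Rightarrow> 'c) \<Rightarrow> ('c \<Rightarrow> 'd) \<Rightarrow> bool" where
  "short_exact R X M Y f g \<longleftrightarrow> modhom R X M f \<and> modhom R M Y g \<and> inj_on f (carrier X)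
     \<and> g ` carrier M = carrier Y \<and> f ` carrier X = {x \<in> carrier M. g x = \<zero>\<^bsub>Y\<^esub>}"

definition direct_summand :: "'a ring \<Rightarrow> ('a, 'b) module \<Rightarrow> ('a, 'c) module \<Rightarrow> bool" where
  "direct_summand R M X \<longleftrightarrow> (\<exists>i p. modhom R M X i \<and> modhom R X M p \<and> (\<forall>x\<in>carrier M. p (i x) = x))"

definition projective_mod :: "'a ring \<Rightarrow> 'a umod \<Rightarrow> bool" where
  "projective_mod R P \<longleftrightarrow> fg_mod R P \<and>
     (\<forall>(A::'a umod) (B::'a umod) g h. fg_mod R A \<and> fg_mod R B \<and> modhom R A B g
        \<and> g ` carrier A = carrier B \<and> modhom R P B h
        \<longrightarrow> (\<exists>h'. modhom R P A h' \<and> (\<forall>x\<in>carrier P. g (h' x) = h x)))"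

definition resolving :: "'a ring \<Rightarrow> 'a umod set \<Rightarrow> bool" where
  "resolving R \<X> \<longleftrightarrow>
     \<X> \<subseteq> {M. fg_mod R M}
   \<and> (\<forall>M N. M \<in> \<X> \<and> fg_mod R N \<and> mod_iso R N M \<longrightarrow> N \<in> \<X>)
   \<and> (\<forall>P. projective_mod R P \<longrightarrow> P \<in> \<X>)
   \<and> (\<forall>M X. X \<in> \<X> \<and> fg_mod R M \<and> direct_summand R M X \<longrightarrow> M \<in> \<X>)
   \<and> (\<forall>X M Y f g. X \<in> \<X> \<and> Y \<in> \<X> \<and> fg_mod R M \<and> short_exact R X M Y f g \<longrightarrow> M \<in> \<X>)
   \<and> (\<forall>X M Y f g. M \<in> \<X> \<and> Y \<in> \<X> \<and> fg_mod R X \<and> short_exact R X M Y f g \<longrightarrow> X \<in> \<X>)"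

definition num_gens :: "'a ring \<Rightarrow> ('a, 'b) module \<Rightarrow> nat" where
  "num_gens R M = (LEAST n. \<exists>g. modhom R (free_mod R n) M g \<and> g ` carrier (free_mod R n) = carrier M)"

definition syz1 :: "'a ring \<Rightarrow> ('a, 'b) module \<Rightarrow> ('a, 'c) module \<Rightarrow> bool" where
  "syz1 R Z N \<longleftrightarrow> (\<exists>g. modhom R (free_mod R (num_gens R Z)) Z g
      \<and> g ` carrier (free_mod R (num_gens R Z)) = carrier Z
      \<and> mod_iso R N (kernel_mod (free_mod R (num_gens R Z)) Z g))"

text \<open>syz R i X N: N is isomorphic to the i-th syzygy of X (Omega^0 X = X).\<close>
fun syz :: "'a ring \<Rightarrow> nat \<Rightarrow> 'a umod \<Rightarrow> 'a umod \<Rightarrow> bool" where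
  "syz R 0 X N = (fg_mod R N \<and> mod_iso R N X)"
| "syz R (Suc i) X N = (fg_mod R N \<and> (\<exists>Z. syz R i X Z \<and> syz1 R Z N))"

text \<open>Additive closure: direct summands of finite direct sums of members of S
  (M is a summand of N_0 + ... + N_(n-1) with inclusion/projection components).\<close>
definition add_closure :: "'a ring \<Rightarrow> 'a umod set \<Rightarrow> 'a umod set" where
  "add_closure R S = {M. fg_mod R M \<and> (\<exists>(n::nat) (N::nat \<Rightarrow> 'a umod) \<iota> \<pi>.
      (\<forall>k<n. N k \<in> S \<and> modhom R M (N k) (\<iota> k) \<and> modhom R (N k) M (\<pi> k))
    \<and> (\<forall>x\<in>carrier M. finsum M (\<lambda>k. \<pi> k (\<iota> k x)) {..<n} = x))}"

definition bracket :: "'a ring \<Rightarrow> 'a umod set \<Rightarrow> 'a umod set" where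
  "bracket R \<X> = add_closure R
     ({N. fg_mod R N \<and> mod_iso R N (free_mod R 1)} \<union> {N. \<exists>i X. X \<in> \<X> \<and> syz R i X N})"

definition circ :: "'a ring \<Rightarrow> 'a umod set \<Rightarrow> 'a umod set \<Rightarrow> 'a umod set" where
  "circ R \<X> \<Y> = {M. fg_mod R M \<and> (\<exists>X\<in>\<X>. \<exists>Y\<in>\<Y>. \<exists>f g. short_exact R X M Y f g)}"

text \<open>ball R C r = [C]_(r+1).\<close>
fun ball :: "'a ring \<Rightarrow> 'a umod \<Rightarrow> nat \<Rightarrow> 'a umod set" where
  "ball R C 0 = bracket R {C}"
| "ball R C (Suc r) = bracket R (circ R (ball R C r) (bracket R {C}))"

definition radius :: "'a ring \<Rightarrow> 'a umod set \<Rightarrow> enat" where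
  "radius R \<X> = (INF n \<in> {n. \<exists>C. fg_mod R C \<and> \<X> \<subseteq> ball R C n}. enat n)"

text \<open>m^n x = 0: all products of n elements of m kill x.\<close>
definition ann_pow :: "'a ring \<Rightarrow> ('a, 'b) module \<Rightarrow> nat \<Rightarrow> 'b \<Rightarrow> bool" where
  "ann_pow R M n x \<longleftrightarrow> (\<forall>as. length as = n \<and> set as \<subseteq> max_ideal R
      \<longrightarrow> (foldr (\<otimes>\<^bsub>R\<^esub>) as \<one>\<^bsub>R\<^esub>) \<odot>\<^bsub>M\<^esub> x = \<zero>\<^bsub>M\<^esub>)"

definition gamma_m :: "'a ring \<Rightarrow> ('a, 'b) module \<Rightarrow> 'b set" where
  "gamma_m R M = {x \<in> carrier M. \<exists>n. ann_pow R M n x}"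

definition loewy_length :: "'a ring \<Rightarrow> ('a, 'b) module \<Rightarrow> 'b set \<Rightarrow> enat" where
  "loewy_length R M N = (INF n \<in> {n. \<forall>x\<in>N. ann_pow R M n x}. enat n)"

end

theory Submission
  imports Defs
begin

text \<open>Write \<open>\<Gamma>\<close> for \<open>\<Gamma>\<^sub>m\<close>. As \<open>R\<close> is Noetherian, the ascending chain of annihilators
  \<open>(0 :\<^sub>R m\<^sup>k)\<close> stabilises, so a fixed power of \<open>m\<close> kills \<open>\<Gamma>(R)\<close>, hence \<open>\<Gamma>(N)\<close> for every submodule
  \<open>N\<close> of a free module, in particular for every syzygy; for a finitely generated \<open>C\<close> the chain
  \<open>(0 :\<^sub>C m\<^sup>k)\<close> stabilises as well. A bound \<open>m\<^sup>b \<Gamma>(M) = 0\<close> passes to direct summands, and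
  along \<open>0 \<rightarrow> X \<rightarrow> M \<rightarrow> Y \<rightarrow> 0\<close> the exponents add. So if \<open>B\<close> works for \<open>R\<close> and \<open>C\<close>,
  then \<open>(r + 1) B\<close> works for every module in \<open>[C]\<^sub>r\<^sub>+\<^sub>1\<close>, and finite radius puts all of \<open>\<X>\<close>
  into one such ball.\<close>

section \<open>Annihilation by powers of the maximal ideal\<close>

definition ring_prod_list :: "('a, 'c) ring_scheme \<Rightarrow> 'a list \<Rightarrow> 'a" where
  "ring_prod_list R as = foldr (\<otimes>\<^bsub>R\<^esub>) as \<one>\<^bsub>R\<^esub>"

lemma (in ring) ring_prod_list_closed:
  "set as \<subseteq> carrier R \<Longrightarrow> ring_prod_list R as \<in> carrier R"
  by (induction as) (auto simp: ring_prod_list_def)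

lemma (in ring) ring_prod_list_append:
  "set as \<subseteq> carrier R \<Longrightarrow> set bs \<subseteq> carrier R \<Longrightarrow>
   ring_prod_list R (as @ bs) = ring_prod_list R as \<otimes> ring_prod_list R bs"
proof (induction as)
  case Nil
  then show ?case using ring_prod_list_closed[of bs] by (simp add: ring_prod_list_def)
next
  case (Cons a as)
  then show ?case using ring_prod_list_closed[of as] ring_prod_list_closed[of bs]
    by (simp add: ring_prod_list_def m_assoc)
qed

lemma (in ring) ring_prod_list_take_drop:
  "set as \<subseteq> carrier R \<Longrightarrow>
   ring_prod_list R as = ring_prod_list R (take k as) \<otimes> ring_prod_list R (drop k as)"
  using ring_prod_list_append[of "take k as" "drop k as"]
  by (metis append_take_drop_id le_sup_iff set_append)

lemma ann_pow_iff:
  "ann_pow R M n x \<longleftrightarrow> (\<forall>as. length as = n \<and> set as \<subseteq> max_ideal R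
      \<longrightarrow> ring_prod_list R as \<odot>\<^bsub>M\<^esub> x = \<zero>\<^bsub>M\<^esub>)"
  by (simp add: ann_pow_def ring_prod_list_def)

lemma max_ideal_maximal: "local_ring R \<Longrightarrow> maximalideal (max_ideal R) R"
  unfolding local_ring_def max_ideal_def by (metis theI')

lemma max_ideal_subset: "local_ring R \<Longrightarrow> max_ideal R \<subseteq> carrier R"
  using max_ideal_maximal maximalideal.axioms(1) ideal.axioms(1) additive_subgroup.a_subset
  by blast

lemma ring_prod_list_max_ideal_closed:
  "local_ring R \<Longrightarrow> set as \<subseteq> max_ideal R \<Longrightarrow> ring_prod_list R as \<in> carrier R"
  by (meson cring.axioms(1) local_ring_def max_ideal_subset ring.ring_prod_list_closed subset_trans)

lemma modhom_zero:
  assumes M: "module R M" and f: "modhom R M N f"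
    and N: "\<And>y. y \<in> carrier N \<Longrightarrow> \<zero>\<^bsub>R\<^esub> \<odot>\<^bsub>N\<^esub> y = \<zero>\<^bsub>N\<^esub>"
  shows "f \<zero>\<^bsub>M\<^esub> = \<zero>\<^bsub>N\<^esub>"
proof -
  interpret module R M by fact
  have "f \<zero>\<^bsub>M\<^esub> = f (\<zero>\<^bsub>R\<^esub> \<odot>\<^bsub>M\<^esub> \<zero>\<^bsub>M\<^esub>)" by simp
  also have "\<dots> = \<zero>\<^bsub>R\<^esub> \<odot>\<^bsub>N\<^esub> f \<zero>\<^bsub>M\<^esub>"
    using f zero_closed M.zero_closed unfolding modhom_def by blast
  also have "\<dots> = \<zero>\<^bsub>N\<^esub>" using f N by (simp add: modhom_def Pi_iff)
  finally show ?thesis .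
qed

lemma modhom_module_zero:
  "module R M \<Longrightarrow> module R N \<Longrightarrow> modhom R M N f \<Longrightarrow> f \<zero>\<^bsub>M\<^esub> = \<zero>\<^bsub>N\<^esub>"
  by (metis modhom_zero module.smult_l_null)

lemma modhom_free_mod_zero:
  assumes M: "module R M" and f: "modhom R M (free_mod R n) f"
  shows "f \<zero>\<^bsub>M\<^esub> = \<zero>\<^bsub>free_mod R n\<^esub>"
proof (rule modhom_zero[OF M f])
  interpret module R M by fact
  fix y assume "y \<in> carrier (free_mod R n)"
  then have "length y = n" "\<And>i. i < n \<Longrightarrow> y ! i \<in> carrier R"
    by (auto simp: free_mod_def dest: nth_mem)
  then show "\<zero>\<^bsub>R\<^esub> \<odot>\<^bsub>free_mod R n\<^esub> y = \<zero>\<^bsub>free_mod R n\<^esub>"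
    by (simp add: free_mod_def list_eq_iff_nth_eq)
qed

definition gamma_loewy_le :: "'a ring \<Rightarrow> ('a, 'b) module \<Rightarrow> nat \<Rightarrow> bool" where
  "gamma_loewy_le R M b \<longleftrightarrow> (\<forall>x\<in>gamma_m R M. ann_pow R M b x)"

lemma loewy_length_gamma_le:
  "gamma_loewy_le R M b \<Longrightarrow> loewy_length R M (gamma_m R M) \<le> enat b"
  unfolding loewy_length_def gamma_loewy_le_def by (rule INF_lower) simp

context
  fixes R :: "'a ring" (structure)
  assumes local: "local_ring R"
begin

lemma ann_pow_mono:
  assumes M: "module R M" and x: "x \<in> carrier M"
    and ann: "ann_pow R M k x" and "k \<le> j"
  shows "ann_pow R M j x"
  unfolding ann_pow_iff
proof (intro allI impI)
  interpret module R M by fact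
  fix as assume as: "length as = j \<and> set as \<subseteq> max_ideal R"
  let ?bs = "take (j - k) as" and ?cs = "drop (j - k) as"
  have bs: "set ?bs \<subseteq> max_ideal R" and cs: "set ?cs \<subseteq> max_ideal R" "length ?cs = k"
    using as \<open>k \<le> j\<close> by (auto dest: in_set_takeD in_set_dropD)
  have "ring_prod_list R as = ring_prod_list R ?bs \<otimes> ring_prod_list R ?cs"
    using as max_ideal_subset[OF local] by (intro ring_prod_list_take_drop) auto
  then have "ring_prod_list R as \<odot>\<^bsub>M\<^esub> x = ring_prod_list R ?bs \<odot>\<^bsub>M\<^esub> (ring_prod_list R ?cs \<odot>\<^bsub>M\<^esub> x)"
    using x bs cs by (simp add: smult_assoc1 ring_prod_list_max_ideal_closed[OF local])
  also have "\<dots> = \<zero>\<^bsub>M\<^esub>"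
    using ann cs bs by (simp add: ann_pow_iff ring_prod_list_max_ideal_closed[OF local])
  finally show "ring_prod_list R as \<odot>\<^bsub>M\<^esub> x = \<zero>\<^bsub>M\<^esub>" .
qed

lemma ann_pow_smult:
  assumes M: "module R M" and a: "a \<in> carrier R" and x: "x \<in> carrier M"
    and ann: "ann_pow R M k x"
  shows "ann_pow R M k (a \<odot>\<^bsub>M\<^esub> x)"
  unfolding ann_pow_iff
proof (intro allI impI)
  interpret module R M by fact
  fix as assume as: "length as = k \<and> set as \<subseteq> max_ideal R"
  then have "ring_prod_list R as \<odot>\<^bsub>M\<^esub> (a \<odot>\<^bsub>M\<^esub> x) = a \<odot>\<^bsub>M\<^esub> (ring_prod_list R as \<odot>\<^bsub>M\<^esub> x)"
    using a x ring_prod_list_max_ideal_closed[OF local] by (simp add: smult_assoc1[symmetric] m_comm)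
  then show "ring_prod_list R as \<odot>\<^bsub>M\<^esub> (a \<odot>\<^bsub>M\<^esub> x) = \<zero>\<^bsub>M\<^esub>"
    using ann as a by (simp add: ann_pow_iff)
qed

lemma ann_pow_image:
  assumes M: "module R M" and f: "modhom R M N f" and z: "f \<zero>\<^bsub>M\<^esub> = \<zero>\<^bsub>N\<^esub>"
    and x: "x \<in> carrier M" and ann: "ann_pow R M k x"
  shows "ann_pow R N k (f x)"
  unfolding ann_pow_iff
proof (intro allI impI)
  fix as assume as: "length as = k \<and> set as \<subseteq> max_ideal R"
  then have "ring_prod_list R as \<odot>\<^bsub>N\<^esub> f x = f (ring_prod_list R as \<odot>\<^bsub>M\<^esub> x)"
    using f x ring_prod_list_max_ideal_closed[OF local] by (simp add: modhom_def)
  then show "ring_prod_list R as \<odot>\<^bsub>N\<^esub> f x = \<zero>\<^bsub>N\<^esub>"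
    using ann as z by (simp add: ann_pow_iff)
qed

lemma ann_pow_preimage:
  assumes M: "module R M" and f: "modhom R M N f" and z: "f \<zero>\<^bsub>M\<^esub> = \<zero>\<^bsub>N\<^esub>"
    and inj: "inj_on f (carrier M)" and x: "x \<in> carrier M" and ann: "ann_pow R N k (f x)"
  shows "ann_pow R M k x"
  unfolding ann_pow_iff
proof (intro allI impI)
  interpret module R M by fact
  fix as assume as: "length as = k \<and> set as \<subseteq> max_ideal R"
  then have p: "ring_prod_list R as \<in> carrier R" using ring_prod_list_max_ideal_closed[OF local] by blast
  then have "f (ring_prod_list R as \<odot>\<^bsub>M\<^esub> x) = ring_prod_list R as \<odot>\<^bsub>N\<^esub> f x"
    using f x by (simp add: modhom_def)
  also have "\<dots> = f \<zero>\<^bsub>M\<^esub>" using ann as z by (simp add: ann_pow_iff)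
  finally show "ring_prod_list R as \<odot>\<^bsub>M\<^esub> x = \<zero>\<^bsub>M\<^esub>"
    using inj p x by (auto dest: inj_onD)
qed

lemma gamma_m_image:
  assumes M: "module R M" and f: "modhom R M N f" and z: "f \<zero>\<^bsub>M\<^esub> = \<zero>\<^bsub>N\<^esub>"
    and x: "x \<in> gamma_m R M"
  shows "f x \<in> gamma_m R N"
proof -
  obtain k where xc: "x \<in> carrier M" and "ann_pow R M k x" using x by (auto simp: gamma_m_def)
  then have "ann_pow R N k (f x)" by (rule ann_pow_image[OF M f z])
  moreover have "f x \<in> carrier N" using f xc by (auto simp: modhom_def)
  ultimately show ?thesis by (auto simp: gamma_m_def)
qed

lemma gamma_m_preimage:
  assumes M: "module R M" and f: "modhom R M N f" and z: "f \<zero>\<^bsub>M\<^esub> = \<zero>\<^bsub>N\<^esub>"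
    and inj: "inj_on f (carrier M)" and x: "x \<in> carrier M" and fx: "f x \<in> gamma_m R N"
  shows "x \<in> gamma_m R M"
proof -
  obtain k where "ann_pow R N k (f x)" using fx by (auto simp: gamma_m_def)
  then have "ann_pow R M k x" by (rule ann_pow_preimage[OF M f z inj x])
  then show ?thesis using x by (auto simp: gamma_m_def)
qed

lemma gamma_m_smult:
  assumes M: "module R M" and a: "a \<in> carrier R" and x: "x \<in> gamma_m R M"
  shows "a \<odot>\<^bsub>M\<^esub> x \<in> gamma_m R M"
proof -
  interpret module R M by fact
  obtain k where xc: "x \<in> carrier M" and "ann_pow R M k x" using x by (auto simp: gamma_m_def)
  then have "ann_pow R M k (a \<odot>\<^bsub>M\<^esub> x)" by (rule ann_pow_smult[OF M a])
  then show ?thesis using a xc by (auto simp: gamma_m_def)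
qed

lemma gamma_loewy_le_mono:
  assumes M: "module R M" and b: "gamma_loewy_le R M b" and "b \<le> b'"
  shows "gamma_loewy_le R M b'"
  unfolding gamma_loewy_le_def
proof
  fix x assume x: "x \<in> gamma_m R M"
  then show "ann_pow R M b' x"
    using b ann_pow_mono[OF M _ _ \<open>b \<le> b'\<close>] by (simp add: gamma_loewy_le_def gamma_m_def)
qed

lemma gamma_loewy_le_inj:
  assumes M: "module R M" and f: "modhom R M N f" and z: "f \<zero>\<^bsub>M\<^esub> = \<zero>\<^bsub>N\<^esub>"
    and inj: "inj_on f (carrier M)" and N: "gamma_loewy_le R N b"
  shows "gamma_loewy_le R M b"
  unfolding gamma_loewy_le_def
proof
  fix x assume x: "x \<in> gamma_m R M"
  then have "ann_pow R N b (f x)"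
    using N gamma_m_image[OF M f z x] by (simp add: gamma_loewy_le_def)
  then show "ann_pow R M b x"
    using x by (intro ann_pow_preimage[OF M f z inj]) (simp_all add: gamma_m_def)
qed

lemma gamma_loewy_le_summand:
  assumes M: "module R M"
    and N: "\<And>k. k < n \<Longrightarrow> module R (N k) \<and> gamma_loewy_le R (N k) b
                            \<and> modhom R M (N k) (\<iota> k) \<and> modhom R (N k) M (\<pi> k)"
    and sum: "\<And>x. x \<in> carrier M \<Longrightarrow> finsum M (\<lambda>k. \<pi> k (\<iota> k x)) {..<n} = x"
  shows "gamma_loewy_le R M b"
  unfolding gamma_loewy_le_def ann_pow_iff
proof (intro ballI allI impI)
  interpret module R M by fact
  fix x as assume x: "x \<in> gamma_m R M" and as: "length as = b \<and> set as \<subseteq> max_ideal R"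
  let ?p = "ring_prod_list R as"
  have p: "?p \<in> carrier R" and xc: "x \<in> carrier M" using as x ring_prod_list_max_ideal_closed[OF local] by (auto simp: gamma_m_def)
  have zero: "\<pi> k (\<iota> k (?p \<odot>\<^bsub>M\<^esub> x)) = \<zero>\<^bsub>M\<^esub>" if k: "k < n" for k
  proof -
    have Nk: "module R (N k)" and \<iota>: "modhom R M (N k) (\<iota> k)" and \<pi>: "modhom R (N k) M (\<pi> k)"
      and b: "gamma_loewy_le R (N k) b" using N[OF k] by auto
    have "\<iota> k x \<in> gamma_m R (N k)"
      using gamma_m_image[OF M \<iota> modhom_module_zero[OF M Nk \<iota>] x] .
    then have "?p \<odot>\<^bsub>N k\<^esub> \<iota> k x = \<zero>\<^bsub>N k\<^esub>"
      using b as by (simp add: gamma_loewy_le_def ann_pow_iff)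
    moreover have "\<iota> k (?p \<odot>\<^bsub>M\<^esub> x) = ?p \<odot>\<^bsub>N k\<^esub> \<iota> k x" using \<iota> p xc by (simp add: modhom_def)
    ultimately show ?thesis using modhom_module_zero[OF Nk M \<pi>] by simp
  qed
  have "?p \<odot>\<^bsub>M\<^esub> x = finsum M (\<lambda>k. \<pi> k (\<iota> k (?p \<odot>\<^bsub>M\<^esub> x))) {..<n}"
    using sum p xc by simp
  also have "\<dots> = finsum M (\<lambda>k. \<zero>\<^bsub>M\<^esub>) {..<n}"
    by (rule finsum_cong') (simp_all add: zero)
  finally show "?p \<odot>\<^bsub>M\<^esub> x = \<zero>\<^bsub>M\<^esub>" by simp
qed

text \<open>If \<open>m\<^sup>b\<^sub>2\<close> kills \<open>\<Gamma>\<^sub>m(Y)\<close>, it maps \<open>\<Gamma>\<^sub>m(M)\<close> into the image of \<open>\<Gamma>\<^sub>m(X)\<close>,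
  which \<open>m\<^sup>b\<^sub>1\<close> kills.\<close>
lemma gamma_loewy_le_extension:
  assumes X: "module R X" and M: "module R M" and Y: "module R Y"
    and ses: "short_exact R X M Y f g"
    and bX: "gamma_loewy_le R X b1" and bY: "gamma_loewy_le R Y b2"
  shows "gamma_loewy_le R M (b1 + b2)"
  unfolding gamma_loewy_le_def ann_pow_iff
proof (intro ballI allI impI)
  interpret module R M by fact
  have f: "modhom R X M f" and g: "modhom R M Y g" and inj: "inj_on f (carrier X)"
    and ker: "f ` carrier X = {x \<in> carrier M. g x = \<zero>\<^bsub>Y\<^esub>}"
    using ses by (auto simp: short_exact_def)
  note fz = modhom_module_zero[OF X M f] and gz = modhom_module_zero[OF M Y g]
  fix x as assume x: "x \<in> gamma_m R M" and as: "length as = b1 + b2 \<and> set as \<subseteq> max_ideal R"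
  let ?p = "ring_prod_list R (take b1 as)" and ?q = "ring_prod_list R (drop b1 as)"
  have xc: "x \<in> carrier M" using x by (simp add: gamma_m_def)
  have take: "length (take b1 as) = b1" "set (take b1 as) \<subseteq> max_ideal R"
    and drop: "length (drop b1 as) = b2" "set (drop b1 as) \<subseteq> max_ideal R"
    using as by (auto dest: in_set_takeD in_set_dropD)
  have p: "?p \<in> carrier R" and q: "?q \<in> carrier R" using take drop ring_prod_list_max_ideal_closed[OF local] by auto
  have "?q \<odot>\<^bsub>Y\<^esub> g x = \<zero>\<^bsub>Y\<^esub>"
    using bY gamma_m_image[OF M g gz x] drop unfolding gamma_loewy_le_def ann_pow_iff by blast
  then have "g (?q \<odot>\<^bsub>M\<^esub> x) = \<zero>\<^bsub>Y\<^esub>" using g q xc by (simp add: modhom_def)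
  then have "?q \<odot>\<^bsub>M\<^esub> x \<in> f ` carrier X" using ker q xc by simp
  then obtain y where fy: "?q \<odot>\<^bsub>M\<^esub> x = f y" and y: "y \<in> carrier X" by (rule imageE)
  have "y \<in> gamma_m R X"
    using gamma_m_smult[OF M q x] unfolding fy by (rule gamma_m_preimage[OF X f fz inj y])
  then have py: "?p \<odot>\<^bsub>X\<^esub> y = \<zero>\<^bsub>X\<^esub>"
    using bX take unfolding gamma_loewy_le_def ann_pow_iff by blast
  have "ring_prod_list R as = ?p \<otimes> ?q"
    using as max_ideal_subset[OF local] by (intro ring_prod_list_take_drop) auto
  then have "ring_prod_list R as \<odot>\<^bsub>M\<^esub> x = ?p \<odot>\<^bsub>M\<^esub> f y"
    using p q xc fy by (simp add: smult_assoc1)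
  also have "\<dots> = f (?p \<odot>\<^bsub>X\<^esub> y)" using f p y by (simp add: modhom_def)
  also have "\<dots> = \<zero>\<^bsub>M\<^esub>" using py fz by simp
  finally show "ring_prod_list R as \<odot>\<^bsub>M\<^esub> x = \<zero>\<^bsub>M\<^esub>" .
qed

end

section \<open>The torsion of the ring\<close>

definition ring_ann_pow :: "'a ring \<Rightarrow> nat \<Rightarrow> 'a \<Rightarrow> bool" where
  "ring_ann_pow R k r \<longleftrightarrow> (\<forall>as. length as = k \<and> set as \<subseteq> max_ideal R
      \<longrightarrow> ring_prod_list R as \<otimes>\<^bsub>R\<^esub> r = \<zero>\<^bsub>R\<^esub>)"

definition ring_gamma_loewy_le :: "'a ring \<Rightarrow> nat \<Rightarrow> bool" where
  "ring_gamma_loewy_le R b \<longleftrightarrow> (\<forall>k. \<forall>r\<in>carrier R. ring_ann_pow R k r \<longrightarrow> ring_ann_pow R b r)"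

lemma ann_pow_free_mod_iff:
  "x \<in> carrier (free_mod R n) \<Longrightarrow>
   ann_pow R (free_mod R n) k x \<longleftrightarrow> (\<forall>i<n. ring_ann_pow R k (x ! i))"
  by (auto simp: ann_pow_iff ring_ann_pow_def free_mod_def list_eq_iff_nth_eq)

lemma gamma_loewy_le_free_mod:
  assumes b: "ring_gamma_loewy_le R b"
  shows "gamma_loewy_le R (free_mod R n) b"
  unfolding gamma_loewy_le_def
proof
  fix x assume "x \<in> gamma_m R (free_mod R n)"
  then obtain k where x: "x \<in> carrier (free_mod R n)" and "ann_pow R (free_mod R n) k x"
    by (auto simp: gamma_m_def)
  then have "ring_ann_pow R k (x ! i)" if "i < n" for i
    using that by (simp add: ann_pow_free_mod_iff)
  moreover have "x ! i \<in> carrier R" if "i < n" for i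
    using x that by (auto simp: free_mod_def dest: nth_mem)
  ultimately have "\<forall>i<n. ring_ann_pow R b (x ! i)"
    using b unfolding ring_gamma_loewy_le_def by blast
  then show "ann_pow R (free_mod R n) b x" using x by (simp add: ann_pow_free_mod_iff)
qed

lemma (in cring) idealI_cring:
  assumes sub: "I \<subseteq> carrier R" and zero: "\<zero> \<in> I"
    and add: "\<And>a b. a \<in> I \<Longrightarrow> b \<in> I \<Longrightarrow> a \<oplus> b \<in> I"
    and mult: "\<And>r a. r \<in> carrier R \<Longrightarrow> a \<in> I \<Longrightarrow> r \<otimes> a \<in> I"
  shows "ideal I R"
proof (rule idealI)
  have "\<ominus> a \<in> I" if "a \<in> I" for a
    using mult[of "\<ominus> \<one>" a] that sub by (auto simp: l_minus)
  then show "subgroup I (add_monoid R)"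
    using sub zero add by (intro add.subgroupI) (auto simp: a_inv_def)
  show "x \<otimes> a \<in> I" if "a \<in> I" "x \<in> carrier R" for a x using mult that by blast
  show "a \<otimes> x \<in> I" if "a \<in> I" "x \<in> carrier R" for a x
    using mult that sub m_comm by (metis subsetD)
qed (rule ring_axioms)

lemma (in noetherian_ring) ideal_chain_bounded:
  fixes J :: "nat \<Rightarrow> 'a set"
  assumes ideal: "\<And>k. ideal (J k) R" and "mono J"
  shows "\<exists>k0. \<forall>k. J k \<subseteq> J k0"
proof -
  have "J i \<subseteq> J j \<or> J j \<subseteq> J i" for i j
    using nat_le_linear[of i j] monoD[OF \<open>mono J\<close>] by blast
  then have "subset.chain {I. ideal I R} (range J)"
    using ideal by (auto simp: pred_on.chain_def subset_iff_psubset_eq)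
  then have "\<Union>(range J) \<in> range J" by (intro ideal_chain_is_trivial) simp_all
  then show ?thesis by blast
qed

context
  fixes R :: "'a ring" (structure)
  assumes local: "local_ring R"
begin

interpretation noetherian_ring R
  using local by (simp add: local_ring_def)

interpretation cring R
  using local by (simp add: local_ring_def)

lemma ring_ann_pow_mono:
  assumes r: "r \<in> carrier R" and ann: "ring_ann_pow R k r" and "k \<le> j"
  shows "ring_ann_pow R j r"
  unfolding ring_ann_pow_def
proof (intro allI impI)
  fix as assume as: "length as = j \<and> set as \<subseteq> max_ideal R"
  let ?bs = "take (j - k) as" and ?cs = "drop (j - k) as"
  have bs: "set ?bs \<subseteq> max_ideal R" and cs: "set ?cs \<subseteq> max_ideal R" "length ?cs = k"
    using as \<open>k \<le> j\<close> by (auto dest: in_set_takeD in_set_dropD)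
  have "ring_prod_list R as = ring_prod_list R ?bs \<otimes> ring_prod_list R ?cs"
    using as max_ideal_subset[OF local] by (intro ring_prod_list_take_drop) auto
  then have "ring_prod_list R as \<otimes> r = ring_prod_list R ?bs \<otimes> (ring_prod_list R ?cs \<otimes> r)"
    using r bs cs by (simp add: m_assoc ring_prod_list_max_ideal_closed[OF local])
  also have "\<dots> = \<zero>"
    using ann cs bs by (simp add: ring_ann_pow_def ring_prod_list_max_ideal_closed[OF local])
  finally show "ring_prod_list R as \<otimes> r = \<zero>" .
qed

lemma ideal_ring_ann_pow: "ideal {r \<in> carrier R. ring_ann_pow R k r} R"
proof (rule idealI_cring)
  show "a \<oplus> b \<in> {r \<in> carrier R. ring_ann_pow R k r}"
    if "a \<in> {r \<in> carrier R. ring_ann_pow R k r}" "b \<in> {r \<in> carrier R. ring_ann_pow R k r}" for a b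
    using that ring_prod_list_max_ideal_closed[OF local] by (auto simp: ring_ann_pow_def r_distr)
  show "r \<otimes> a \<in> {r \<in> carrier R. ring_ann_pow R k r}"
    if "r \<in> carrier R" "a \<in> {r \<in> carrier R. ring_ann_pow R k r}" for r a
    using that ring_prod_list_max_ideal_closed[OF local] by (auto simp: ring_ann_pow_def m_lcomm)
qed (use ring_prod_list_max_ideal_closed[OF local] in \<open>auto simp: ring_ann_pow_def\<close>)

text \<open>The annihilators \<open>(0 :\<^sub>R m\<^sup>k)\<close> form an ascending chain of ideals, which stabilises.\<close>
lemma ex_ring_gamma_loewy_le: "\<exists>b. ring_gamma_loewy_le R b"
proof -
  define J where "J k = {r \<in> carrier R. ring_ann_pow R k r}" for k
  have "mono J" using ring_ann_pow_mono by (auto simp: mono_def J_def)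
  moreover have "ideal (J k) R" for k unfolding J_def by (rule ideal_ring_ann_pow)
  ultimately obtain k0 where "\<forall>k. J k \<subseteq> J k0" using ideal_chain_bounded by blast
  then have "ring_gamma_loewy_le R k0" by (auto simp: ring_gamma_loewy_le_def J_def)
  then show ?thesis ..
qed

lemma gamma_loewy_le_into_free_mod:
  assumes M: "module R M" and f: "modhom R M (free_mod R n) f" and inj: "inj_on f (carrier M)"
    and b: "ring_gamma_loewy_le R b"
  shows "gamma_loewy_le R M b"
  using gamma_loewy_le_inj[OF local M f modhom_free_mod_zero[OF M f] inj gamma_loewy_le_free_mod[OF b]] .

end

section \<open>Finitely generated modules over a Noetherian ring\<close>

fun list_span :: "('a, 'c) ring_scheme \<Rightarrow> ('a, 'b, 'd) module_scheme \<Rightarrow> 'b list \<Rightarrow> 'b set" where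
  "list_span R M [] = {\<zero>\<^bsub>M\<^esub>}"
| "list_span R M (x # xs) = {r \<odot>\<^bsub>M\<^esub> x \<oplus>\<^bsub>M\<^esub> c | r c. r \<in> carrier R \<and> c \<in> list_span R M xs}"

lemma (in abelian_group) a_diff_cancel_left:
  assumes "a \<in> carrier G" "c \<in> carrier G" "d \<in> carrier G"
  shows "(a \<oplus> c) \<ominus> (a \<oplus> d) = c \<ominus> d"
proof -
  have "(a \<oplus> c) \<ominus> (a \<oplus> d) = (a \<oplus> \<ominus> a) \<oplus> (c \<oplus> \<ominus> d)"
    using assms by (simp add: minus_eq minus_add a_ac)
  also have "\<dots> = c \<ominus> d" using assms by (simp add: r_neg minus_eq)
  finally show ?thesis .
qed

lemma (in module) submoduleI_smult:
  assumes sub: "H \<subseteq> carrier M" and zero: "\<zero>\<^bsub>M\<^esub> \<in> H"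
    and add: "\<And>a b. a \<in> H \<Longrightarrow> b \<in> H \<Longrightarrow> a \<oplus>\<^bsub>M\<^esub> b \<in> H"
    and smult: "\<And>r a. r \<in> carrier R \<Longrightarrow> a \<in> H \<Longrightarrow> r \<odot>\<^bsub>M\<^esub> a \<in> H"
  shows "submodule H R M"
proof (rule submoduleI[OF sub zero _ add smult])
  fix a assume "a \<in> H"
  then show "\<ominus>\<^bsub>M\<^esub> a \<in> H"
    using smult[of "\<ominus> \<one>" a] sub by (auto simp: smult_l_minus)
qed

lemma (in module) submodule_zero:
  assumes H: "submodule H R M"
  shows "\<zero>\<^bsub>M\<^esub> \<in> H"
proof -
  obtain a where a: "a \<in> H" using submoduleE(2)[OF H] by blast
  then have "\<zero> \<odot>\<^bsub>M\<^esub> a \<in> H" using submoduleE(4)[OF H] by blast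
  moreover have "a \<in> carrier M" using a submoduleE(1)[OF H] by blast
  ultimately show ?thesis by simp
qed

lemma (in module) submodule_diff:
  assumes H: "submodule H R M" and a: "a \<in> H" and b: "b \<in> H"
  shows "a \<ominus>\<^bsub>M\<^esub> b \<in> H"
  using submoduleE(5)[OF H a submoduleE(3)[OF H b]] by (simp add: M.minus_eq)

lemma (in module) submodule_finsum:
  assumes H: "submodule H R M" and "finite A" and "\<And>i. i \<in> A \<Longrightarrow> f i \<in> H"
  shows "finsum M f A \<in> H"
  using \<open>finite A\<close> assms(3)
proof (induction A rule: finite_induct)
  case empty
  then show ?case using submodule_zero[OF H] by simp
next
  case (insert a A)
  have "f ` insert a A \<subseteq> carrier M" using insert.prems submoduleE(1)[OF H] by blast
  then have "finsum M f (insert a A) = f a \<oplus>\<^bsub>M\<^esub> finsum M f A"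
    using insert.hyps by (intro finsum_insert) auto
  then show ?case using insert submoduleE(5)[OF H] by simp
qed

lemma (in module) submodule_list_span:
  "set xs \<subseteq> carrier M \<Longrightarrow> submodule (list_span R M xs) R M"
proof (induction xs)
  case Nil
  then show ?case by (intro submoduleI_smult) auto
next
  case (Cons x xs)
  have x: "x \<in> carrier M" and S: "submodule (list_span R M xs) R M" using Cons by auto
  note S_sub = submoduleE(1)[OF S] and S_add = submoduleE(5)[OF S] and S_smult = submoduleE(4)[OF S]
  show ?case
  proof (rule submoduleI_smult)
    show "list_span R M (x # xs) \<subseteq> carrier M" using S_sub x by auto
    have "\<zero>\<^bsub>M\<^esub> = \<zero> \<odot>\<^bsub>M\<^esub> x \<oplus>\<^bsub>M\<^esub> \<zero>\<^bsub>M\<^esub>" using x by simp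
    then show "\<zero>\<^bsub>M\<^esub> \<in> list_span R M (x # xs)"
      using submodule_zero[OF S] unfolding list_span.simps mem_Collect_eq by blast
  next
    fix a b assume "a \<in> list_span R M (x # xs)" "b \<in> list_span R M (x # xs)"
    then obtain r c s d where r: "r \<in> carrier R" "c \<in> list_span R M xs" "a = r \<odot>\<^bsub>M\<^esub> x \<oplus>\<^bsub>M\<^esub> c"
      and s: "s \<in> carrier R" "d \<in> list_span R M xs" "b = s \<odot>\<^bsub>M\<^esub> x \<oplus>\<^bsub>M\<^esub> d" by auto
    moreover have "c \<in> carrier M" "d \<in> carrier M" using r s S_sub by auto
    ultimately have "a \<oplus>\<^bsub>M\<^esub> b = (r \<oplus> s) \<odot>\<^bsub>M\<^esub> x \<oplus>\<^bsub>M\<^esub> (c \<oplus>\<^bsub>M\<^esub> d)"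
      using x by (simp add: smult_l_distr M.a_ac)
    then show "a \<oplus>\<^bsub>M\<^esub> b \<in> list_span R M (x # xs)" using r s S_add by auto
  next
    fix t a assume t: "t \<in> carrier R" and "a \<in> list_span R M (x # xs)"
    then obtain r c where r: "r \<in> carrier R" "c \<in> list_span R M xs" "a = r \<odot>\<^bsub>M\<^esub> x \<oplus>\<^bsub>M\<^esub> c" by auto
    then have "t \<odot>\<^bsub>M\<^esub> a = (t \<otimes> r) \<odot>\<^bsub>M\<^esub> x \<oplus>\<^bsub>M\<^esub> t \<odot>\<^bsub>M\<^esub> c"
      using t S_sub x by (auto simp: smult_r_distr smult_assoc1)
    then show "t \<odot>\<^bsub>M\<^esub> a \<in> list_span R M (x # xs)" using r t S_smult by auto
  qed
qed

lemma (in module) list_span_base: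
  "set xs \<subseteq> carrier M \<Longrightarrow> x \<in> set xs \<Longrightarrow> x \<in> list_span R M xs"
proof (induction xs)
  case (Cons y ys)
  have y: "y \<in> carrier M" and S: "submodule (list_span R M ys) R M"
    using Cons.prems submodule_list_span by auto
  show ?case
  proof (cases "x = y")
    case True
    then have "x = \<one> \<odot>\<^bsub>M\<^esub> y \<oplus>\<^bsub>M\<^esub> \<zero>\<^bsub>M\<^esub>" using y by simp
    then show ?thesis
      using submodule_zero[OF S] unfolding list_span.simps mem_Collect_eq by blast
  next
    case False
    then have "x \<in> list_span R M ys" using Cons by simp
    moreover have "x = \<zero> \<odot>\<^bsub>M\<^esub> y \<oplus>\<^bsub>M\<^esub> x" using y calculation submoduleE(1)[OF S] by auto
    ultimately show ?thesis unfolding list_span.simps mem_Collect_eq by blast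
  qed
qed simp

lemma fg_mod_list_span:
  assumes "fg_mod R M"
  obtains xs where "set xs \<subseteq> carrier M" and "carrier M \<subseteq> list_span R M xs"
proof -
  interpret module R M using assms by (simp add: fg_mod_def)
  obtain xs where xs: "set xs \<subseteq> carrier M" and gen: "\<And>m. m \<in> carrier M \<Longrightarrow>
      \<exists>cs. length cs = length xs \<and> set cs \<subseteq> carrier R
         \<and> m = finsum M (\<lambda>i. (cs ! i) \<odot>\<^bsub>M\<^esub> (xs ! i)) {..<length xs}"
    using assms unfolding fg_mod_def by blast
  have S: "submodule (list_span R M xs) R M" by (rule submodule_list_span[OF xs])
  have "m \<in> list_span R M xs" if m: "m \<in> carrier M" for m
  proof -
    obtain cs where cs: "length cs = length xs" "set cs \<subseteq> carrier R"
      and m: "m = finsum M (\<lambda>i. (cs ! i) \<odot>\<^bsub>M\<^esub> (xs ! i)) {..<length xs}"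
      using gen[OF m] by blast
    have "(cs ! i) \<odot>\<^bsub>M\<^esub> (xs ! i) \<in> list_span R M xs" if i: "i < length xs" for i
    proof (rule submoduleE(4)[OF S])
      show "cs ! i \<in> carrier R" using cs i nth_mem[of i cs] by auto
      show "xs ! i \<in> list_span R M xs" using list_span_base[OF xs] nth_mem[OF i] by blast
    qed
    then show ?thesis unfolding m by (intro submodule_finsum[OF S]) auto
  qed
  then show ?thesis using that xs by blast
qed

definition coeff_ideal :: "('a, 'c) ring_scheme \<Rightarrow> ('a, 'b, 'd) module_scheme \<Rightarrow> 'b \<Rightarrow> 'b set \<Rightarrow> 'b set \<Rightarrow> 'a set" where
  "coeff_ideal R M x S N = {r \<in> carrier R. \<exists>c\<in>S. r \<odot>\<^bsub>M\<^esub> x \<oplus>\<^bsub>M\<^esub> c \<in> N}"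

lemma (in module) ideal_coeff_ideal:
  assumes x: "x \<in> carrier M" and S: "submodule S R M" and N: "submodule N R M"
  shows "ideal (coeff_ideal R M x S N) R"
proof (rule idealI_cring)
  show "coeff_ideal R M x S N \<subseteq> carrier R" by (auto simp: coeff_ideal_def)
  have "\<zero> \<odot>\<^bsub>M\<^esub> x \<oplus>\<^bsub>M\<^esub> \<zero>\<^bsub>M\<^esub> \<in> N" using x submodule_zero[OF N] by simp
  then show "\<zero> \<in> coeff_ideal R M x S N"
    unfolding coeff_ideal_def using submodule_zero[OF S] by blast
next
  fix a b assume "a \<in> coeff_ideal R M x S N" "b \<in> coeff_ideal R M x S N"
  then obtain c d where a: "a \<in> carrier R" "c \<in> S" "a \<odot>\<^bsub>M\<^esub> x \<oplus>\<^bsub>M\<^esub> c \<in> N"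
    and b: "b \<in> carrier R" "d \<in> S" "b \<odot>\<^bsub>M\<^esub> x \<oplus>\<^bsub>M\<^esub> d \<in> N" by (auto simp: coeff_ideal_def)
  have "c \<in> carrier M" "d \<in> carrier M" using a b submoduleE(1)[OF S] by auto
  then have "(a \<odot>\<^bsub>M\<^esub> x \<oplus>\<^bsub>M\<^esub> c) \<oplus>\<^bsub>M\<^esub> (b \<odot>\<^bsub>M\<^esub> x \<oplus>\<^bsub>M\<^esub> d) = (a \<oplus> b) \<odot>\<^bsub>M\<^esub> x \<oplus>\<^bsub>M\<^esub> (c \<oplus>\<^bsub>M\<^esub> d)"
    using a b x by (simp add: smult_l_distr M.a_ac)
  moreover have "(a \<odot>\<^bsub>M\<^esub> x \<oplus>\<^bsub>M\<^esub> c) \<oplus>\<^bsub>M\<^esub> (b \<odot>\<^bsub>M\<^esub> x \<oplus>\<^bsub>M\<^esub> d) \<in> N"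
    using a b submoduleE(5)[OF N] by blast
  moreover have "c \<oplus>\<^bsub>M\<^esub> d \<in> S" using a b submoduleE(5)[OF S] by blast
  ultimately show "a \<oplus> b \<in> coeff_ideal R M x S N"
    unfolding coeff_ideal_def using a(1) b(1) by auto
next
  fix t a assume t: "t \<in> carrier R" and "a \<in> coeff_ideal R M x S N"
  then obtain c where a: "a \<in> carrier R" "c \<in> S" "a \<odot>\<^bsub>M\<^esub> x \<oplus>\<^bsub>M\<^esub> c \<in> N"
    by (auto simp: coeff_ideal_def)
  have "t \<odot>\<^bsub>M\<^esub> (a \<odot>\<^bsub>M\<^esub> x \<oplus>\<^bsub>M\<^esub> c) = (t \<otimes> a) \<odot>\<^bsub>M\<^esub> x \<oplus>\<^bsub>M\<^esub> t \<odot>\<^bsub>M\<^esub> c"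
    using a t x submoduleE(1)[OF S] by (auto simp: smult_r_distr smult_assoc1)
  moreover have "t \<odot>\<^bsub>M\<^esub> (a \<odot>\<^bsub>M\<^esub> x \<oplus>\<^bsub>M\<^esub> c) \<in> N" using a t submoduleE(4)[OF N] by blast
  moreover have "t \<odot>\<^bsub>M\<^esub> c \<in> S" using a t submoduleE(4)[OF S] by blast
  ultimately show "t \<otimes> a \<in> coeff_ideal R M x S N"
    unfolding coeff_ideal_def using a(1) t by auto
qed

lemma (in module) submodule_Int:
  assumes A: "submodule A R M" and B: "submodule B R M"
  shows "submodule (A \<inter> B) R M"
  using submoduleE(1,4,5)[OF A] submoduleE(1,4,5)[OF B] submodule_zero[OF A] submodule_zero[OF B]
  by (intro submoduleI_smult) auto

text \<open>The induction step of the ascending chain condition for finitely generated modules.\<close>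
lemma (in module) submodule_subset_by_coeff_ideal:
  assumes x: "x \<in> carrier M" and S: "submodule S R M" and B: "submodule B R M"
    and C: "submodule C R M" and AC: "A \<subseteq> C" and BC: "B \<subseteq> C"
    and A: "A \<subseteq> {r \<odot>\<^bsub>M\<^esub> x \<oplus>\<^bsub>M\<^esub> c | r c. r \<in> carrier R \<and> c \<in> S}"
    and coeff: "coeff_ideal R M x S A \<subseteq> coeff_ideal R M x S B"
    and CS: "C \<inter> S \<subseteq> B"
  shows "A \<subseteq> B"
proof
  fix z assume z: "z \<in> A"
  then obtain r c where r: "r \<in> carrier R" and c: "c \<in> S" and zrc: "z = r \<odot>\<^bsub>M\<^esub> x \<oplus>\<^bsub>M\<^esub> c"
    using A by blast
  have "r \<in> coeff_ideal R M x S A" using r c z zrc by (auto simp: coeff_ideal_def)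
  then obtain c' where c': "c' \<in> S" and w: "r \<odot>\<^bsub>M\<^esub> x \<oplus>\<^bsub>M\<^esub> c' \<in> B"
    using coeff by (auto simp: coeff_ideal_def)
  let ?w = "r \<odot>\<^bsub>M\<^esub> x \<oplus>\<^bsub>M\<^esub> c'"
  have cc: "c \<in> carrier M" "c' \<in> carrier M" using c c' submoduleE(1)[OF S] by auto
  have "z \<ominus>\<^bsub>M\<^esub> ?w = c \<ominus>\<^bsub>M\<^esub> c'" unfolding zrc using r x cc by (simp add: M.a_diff_cancel_left)
  moreover have "z \<ominus>\<^bsub>M\<^esub> ?w \<in> C" using submodule_diff[OF C] z w AC BC by blast
  moreover have "c \<ominus>\<^bsub>M\<^esub> c' \<in> S" by (rule submodule_diff[OF S c c'])
  ultimately have "z \<ominus>\<^bsub>M\<^esub> ?w \<in> B" using CS by auto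
  then have "(z \<ominus>\<^bsub>M\<^esub> ?w) \<oplus>\<^bsub>M\<^esub> ?w \<in> B" using w submoduleE(5)[OF B] by blast
  moreover have "z \<in> carrier M" "?w \<in> carrier M" using z AC submoduleE(1)[OF C] r x cc by auto
  then have "(z \<ominus>\<^bsub>M\<^esub> ?w) \<oplus>\<^bsub>M\<^esub> ?w = z" by (simp add: M.minus_eq M.a_assoc M.l_neg)
  ultimately show "z \<in> B" by simp
qed

lemma (in module) list_span_chain_bounded:
  fixes N :: "nat \<Rightarrow> 'c set"
  assumes noeth: "noetherian_ring R" and "set xs \<subseteq> carrier M"
    and "\<And>k. submodule (N k) R M" and "mono N" and "\<And>k. N k \<subseteq> list_span R M xs"
  shows "\<exists>k0. \<forall>k. N k \<subseteq> N k0"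
  using assms(2-)
proof (induction xs arbitrary: N)
  case Nil
  then have "N k = {\<zero>\<^bsub>M\<^esub>}" for k using submodule_zero by fastforce
  then show ?case by blast
next
  case (Cons x ys)
  let ?S = "list_span R M ys"
  have x: "x \<in> carrier M" and ys: "set ys \<subseteq> carrier M" using Cons.prems(1) by auto
  have S: "submodule ?S R M" by (rule submodule_list_span[OF ys])
  define I where "I k = coeff_ideal R M x ?S (N k)" for k
  have "mono I" using \<open>mono N\<close> unfolding mono_def I_def coeff_ideal_def by blast
  moreover have "ideal (I k) R" for k
    unfolding I_def by (rule ideal_coeff_ideal[OF x S Cons.prems(2)])
  ultimately obtain k1 where k1: "\<forall>k. I k \<subseteq> I k1"
    using noetherian_ring.ideal_chain_bounded[OF noeth] by blast
  have "\<exists>k2. \<forall>k. N k \<inter> ?S \<subseteq> N k2 \<inter> ?S"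
  proof (rule Cons.IH[OF ys])
    show "submodule (N k \<inter> ?S) R M" for k by (rule submodule_Int[OF Cons.prems(2) S])
    show "mono (\<lambda>k. N k \<inter> ?S)" using \<open>mono N\<close> by (auto simp: mono_def)
  qed auto
  then obtain k2 where k2: "\<forall>k. N k \<inter> ?S \<subseteq> N k2 \<inter> ?S" by blast
  define k0 where "k0 = max k1 k2"
  have "N k \<subseteq> N k0" for k
  proof (rule submodule_subset_by_coeff_ideal[OF x S Cons.prems(2) Cons.prems(2)])
    show "N k \<subseteq> N (max k k0)" and "N k0 \<subseteq> N (max k k0)"
      using \<open>mono N\<close> by (simp_all add: monoD)
    show "N k \<subseteq> {r \<odot>\<^bsub>M\<^esub> x \<oplus>\<^bsub>M\<^esub> c | r c. r \<in> carrier R \<and> c \<in> ?S}"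
      using Cons.prems(4) by simp
    show "coeff_ideal R M x ?S (N k) \<subseteq> coeff_ideal R M x ?S (N k0)"
      using k1 \<open>mono I\<close> monoD[of I k1 k0] unfolding I_def k0_def by auto
    show "N (max k k0) \<inter> ?S \<subseteq> N k0"
      using k2 monoD[OF \<open>mono N\<close>, of k2 k0] unfolding k0_def by auto
  qed
  then show ?case by blast
qed

context
  fixes R :: "'a ring" (structure)
  assumes local: "local_ring R"
begin

text \<open>By the ascending chain condition, the submodules \<open>(0 :\<^sub>M m\<^sup>k)\<close> of a finitely
  generated module stabilise.\<close>
lemma fg_mod_ex_gamma_loewy_le:
  assumes fg: "fg_mod R M"
  shows "\<exists>b. gamma_loewy_le R M b"
proof -
  have M: "module R M" using fg by (simp add: fg_mod_def)
  interpret module R M by fact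
  obtain xs where xs: "set xs \<subseteq> carrier M" and span: "carrier M \<subseteq> list_span R M xs"
    using fg_mod_list_span[OF fg] .
  define N where "N k = {x \<in> carrier M. ann_pow R M k x}" for k
  have "submodule (N k) R M" for k
  proof (rule submoduleI_smult)
    show "\<zero>\<^bsub>M\<^esub> \<in> N k" using ring_prod_list_max_ideal_closed[OF local] by (auto simp: N_def ann_pow_iff)
    show "a \<oplus>\<^bsub>M\<^esub> b \<in> N k" if "a \<in> N k" "b \<in> N k" for a b
      using that ring_prod_list_max_ideal_closed[OF local] by (auto simp: N_def ann_pow_iff smult_r_distr)
    show "r \<odot>\<^bsub>M\<^esub> a \<in> N k" if "r \<in> carrier R" "a \<in> N k" for r a
      using that ann_pow_smult[OF local M] by (auto simp: N_def)
  qed (auto simp: N_def)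
  moreover have "mono N" using ann_pow_mono[OF local M] by (auto simp: mono_def N_def)
  moreover have "N k \<subseteq> list_span R M xs" for k using span by (auto simp: N_def)
  moreover have "noetherian_ring R" using local by (simp add: local_ring_def)
  ultimately have "\<exists>k0. \<forall>k. N k \<subseteq> N k0" using list_span_chain_bounded[OF _ xs] by blast
  then obtain k0 where "\<forall>k. N k \<subseteq> N k0" ..
  then have "gamma_loewy_le R M k0" by (auto simp: gamma_loewy_le_def gamma_m_def N_def)
  then show ?thesis ..
qed

end

section \<open>Balls\<close>

lemma syz_fg_mod: "syz R i X N \<Longrightarrow> fg_mod R N"
  by (cases i) simp_all

lemma modhom_kernel_mod: "modhom R N (kernel_mod F Z g) f \<Longrightarrow> modhom R N F f"
  unfolding modhom_def kernel_mod_def by (auto simp: Pi_iff)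

definition uniform_gamma_loewy_le :: "'a ring \<Rightarrow> 'a umod set \<Rightarrow> nat \<Rightarrow> bool" where
  "uniform_gamma_loewy_le R \<X> b \<longleftrightarrow> (\<forall>X\<in>\<X>. module R X \<and> gamma_loewy_le R X b)"

lemma radius_finite_ball:
  assumes "radius R \<X> < \<infinity>"
  obtains n C where "fg_mod R C" and "\<X> \<subseteq> ball R C n"
proof -
  have "{n. \<exists>C. fg_mod R C \<and> \<X> \<subseteq> ball R C n} \<noteq> {}"
  proof
    assume empty: "{n. \<exists>C. fg_mod R C \<and> \<X> \<subseteq> ball R C n} = {}"
    have "radius R \<X> = (INF n\<in>{}. enat n)" unfolding radius_def by (simp only: empty)
    then have "radius R \<X> = \<infinity>" by (simp add: top_enat_def)
    with assms show False by simp
  qed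
  then show ?thesis using that by blast
qed

context
  fixes R :: "'a ring" (structure)
  assumes local: "local_ring R"
begin

lemma gamma_loewy_le_syz:
  assumes b0: "ring_gamma_loewy_le R b0" "b0 \<le> B"
    and X: "module R X" "gamma_loewy_le R X B" and syz: "syz R i X N"
  shows "gamma_loewy_le R N B"
proof -
  have N: "module R N" using syz_fg_mod[OF syz] by (simp add: fg_mod_def)
  show ?thesis
  proof (cases i)
    case 0
    then obtain f where f: "modhom R N X f" and inj: "inj_on f (carrier N)"
      using syz by (auto simp: mod_iso_def bij_betw_def)
    show ?thesis
      by (rule gamma_loewy_le_inj[OF local N f modhom_module_zero[OF N X(1) f] inj X(2)])
  next
    case (Suc j)
    then obtain Z :: "'a umod" and g where
      "mod_iso R N (kernel_mod (free_mod R (num_gens R Z)) Z g)"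
      using syz by (auto simp: syz1_def)
    then obtain f where f: "modhom R N (kernel_mod (free_mod R (num_gens R Z)) Z g) f"
      and inj: "inj_on f (carrier N)"
      by (auto simp: mod_iso_def bij_betw_def)
    have "gamma_loewy_le R N b0"
      by (rule gamma_loewy_le_into_free_mod[OF local N modhom_kernel_mod[OF f] inj b0(1)])
    then show ?thesis by (rule gamma_loewy_le_mono[OF local N _ b0(2)])
  qed
qed

lemma gamma_loewy_le_bracket:
  assumes b0: "ring_gamma_loewy_le R b0" "b0 \<le> B" and S: "uniform_gamma_loewy_le R S B"
  shows "uniform_gamma_loewy_le R (bracket R S) B"
  unfolding uniform_gamma_loewy_le_def
proof
  fix M assume "M \<in> bracket R S"
  then obtain n and N :: "nat \<Rightarrow> 'a umod" and \<iota> \<pi> where fg: "fg_mod R M"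
    and gens: "\<forall>k<n. N k \<in> {N. fg_mod R N \<and> mod_iso R N (free_mod R 1)} \<union> {N. \<exists>i X. X \<in> S \<and> syz R i X N}
        \<and> modhom R M (N k) (\<iota> k) \<and> modhom R (N k) M (\<pi> k)"
    and sum: "\<forall>x\<in>carrier M. finsum M (\<lambda>k. \<pi> k (\<iota> k x)) {..<n} = x"
    unfolding bracket_def add_closure_def by blast
  have M: "module R M" using fg by (simp add: fg_mod_def)
  have bounded: "module R (N k) \<and> gamma_loewy_le R (N k) B" if k: "k < n" for k
  proof -
    have "fg_mod R (N k)" using gens[rule_format, OF k] syz_fg_mod by blast
    then have Nk: "module R (N k)" by (simp add: fg_mod_def)
    consider "mod_iso R (N k) (free_mod R 1)" | i X where "X \<in> S" "syz R i X (N k)"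
      using gens[rule_format, OF k] by blast
    then have "gamma_loewy_le R (N k) B"
    proof cases
      case 1
      then obtain f where f: "modhom R (N k) (free_mod R 1) f" and inj: "inj_on f (carrier (N k))"
        by (auto simp: mod_iso_def bij_betw_def)
      show ?thesis
        using gamma_loewy_le_into_free_mod[OF local Nk f inj b0(1)]
        by (rule gamma_loewy_le_mono[OF local Nk _ b0(2)])
    next
      case 2
      then have "module R X" "gamma_loewy_le R X B"
        using S unfolding uniform_gamma_loewy_le_def by blast+
      then show ?thesis using gamma_loewy_le_syz[OF b0 _ _ 2(2)] by blast
    qed
    then show ?thesis using Nk by blast
  qed
  have "gamma_loewy_le R M B"
    by (rule gamma_loewy_le_summand[OF local M, where n = n and N = N and \<iota> = \<iota> and \<pi> = \<pi>])
      (use bounded gens sum in blast)+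
  then show "module R M \<and> gamma_loewy_le R M B" using M by blast
qed

lemma gamma_loewy_le_circ:
  assumes "uniform_gamma_loewy_le R \<A> b1" and "uniform_gamma_loewy_le R \<B> b2"
  shows "uniform_gamma_loewy_le R (circ R \<A> \<B>) (b1 + b2)"
  unfolding uniform_gamma_loewy_le_def
proof
  fix M assume "M \<in> circ R \<A> \<B>"
  then obtain X Y f g where fg: "fg_mod R M" and "X \<in> \<A>" "Y \<in> \<B>" and ses: "short_exact R X M Y f g"
    by (auto simp: circ_def)
  then have "module R X" "gamma_loewy_le R X b1" "module R Y" "gamma_loewy_le R Y b2"
    using assms by (auto simp: uniform_gamma_loewy_le_def)
  moreover have M: "module R M" using fg by (simp add: fg_mod_def)
  ultimately show "module R M \<and> gamma_loewy_le R M (b1 + b2)"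
    using gamma_loewy_le_extension[OF local _ M _ ses] by blast
qed

lemma gamma_loewy_le_ball:
  assumes b0: "ring_gamma_loewy_le R b0" "b0 \<le> B"
    and C: "module R C" "gamma_loewy_le R C B"
  shows "uniform_gamma_loewy_le R (ball R C r) (Suc r * B)"
proof -
  have bracket_C: "uniform_gamma_loewy_le R (bracket R {C}) B"
    using C by (intro gamma_loewy_le_bracket[OF b0]) (simp add: uniform_gamma_loewy_le_def)
  show ?thesis
  proof (induction r)
    case 0
    show ?case using bracket_C by simp
  next
    case (Suc r)
    have "b0 \<le> Suc r * B + B" using b0(2) by simp
    moreover have "uniform_gamma_loewy_le R (circ R (ball R C r) (bracket R {C})) (Suc r * B + B)"
      by (rule gamma_loewy_le_circ[OF Suc.IH bracket_C])
    ultimately show ?case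
      using gamma_loewy_le_bracket[OF b0(1)] by (simp add: add.commute)
  qed
qed

end

theorem proposition4p3:
  fixes R :: "'a ring" and \<X> :: "'a umod set"
  assumes "local_ring R"
    and "resolving R \<X>"
    and "radius R \<X> < \<infinity>"
  shows "(SUP X\<in>\<X>. loewy_length R X (gamma_m R X)) < \<infinity>"
proof -
  note local = assms(1)
  obtain n C where C: "fg_mod R C" and XC: "\<X> \<subseteq> ball R C n"
    using radius_finite_ball[OF assms(3)] .
  obtain b0 where b0: "ring_gamma_loewy_le R b0" using ex_ring_gamma_loewy_le[OF local] ..
  obtain bC where bC: "gamma_loewy_le R C bC" using fg_mod_ex_gamma_loewy_le[OF local C] ..
  define B where "B = max bC b0"
  have CM: "module R C" using C by (simp add: fg_mod_def)
  have "uniform_gamma_loewy_le R (ball R C n) (Suc n * B)"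
    using gamma_loewy_le_ball[OF local b0 _ CM gamma_loewy_le_mono[OF local CM bC]]
    by (simp add: B_def)
  then have "loewy_length R X (gamma_m R X) \<le> enat (Suc n * B)" if "X \<in> \<X>" for X
    using that XC by (intro loewy_length_gamma_le) (auto simp: uniform_gamma_loewy_le_def)
  then have "(SUP X\<in>\<X>. loewy_length R X (gamma_m R X)) \<le> enat (Suc n * B)"
    by (rule SUP_least)
  then show ?thesis using enat_ord_simps(4) le_less_trans by blast
qed

end
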